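(* For every positive integer $n$, let $H(n)=\sum_{i=1}^n \frac{1}{i}$ denote the $n$-th harmonic number and let $\gamma$ denote the Euler–Mascheroni constant. Then \[ -\frac{1}{12n^2+\frac{2(7-12\gamma)}{2\gamma-1}}\le H(n)-\ln n-\frac{1}{2n}-\gamma<-\frac{1}{12n^2+\frac{6}{5}}, \] with equality in the left-hand inequality if and only if $n=1$. Moreover, the constants $\frac{2(7-12\gamma)}{2\gamma-1}$ and $\frac{6}{5}$ are the best possible: the former cannot be replaced by any larger constant and the latter cannot be replaced by any smaller constant while keeping the respective inequality valid for all positive integers $n$.
   Context: $\gamma=\lim_{n\to\infty}\bigl(H(n)-\ln n\bigr)=0.57721566\ldots$ is the Euler–Mascheroni constant; $\ln$ is the natural logarithm. *)

theory Defs
  imports "HOL-Analysis.Analysis"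
begin

definition H :: "nat \<Rightarrow> real" where
  "H n = (\<Sum>i=1..n. 1 / real i)"

definition R :: "nat \<Rightarrow> real" where
  "R n = H n - ln (real n) - 1 / (2 * real n) - (euler_mascheroni :: real)"

end

theory Submission
  imports Defs "HOL-Real_Asymp.Real_Asymp"
begin

text \<open>
  \<open>R\<close> tends to \<open>0\<close>, and \<open>R k - R (k + 1)\<close> is the value at \<open>x = k\<close> of an elementary function
  \<open>R_step\<close> with derivative \<open>1 / (2 x\<^sup>2 (x + 1)\<^sup>2)\<close>. For a comparison function \<open>\<phi>\<close> tending
  to \<open>0\<close>, the increments of \<open>R k + \<phi> k\<close> are the values of \<open>R_step x + \<phi> x - \<phi> (x + 1)\<close>,
  which also tends to \<open>0\<close>; so if its derivative has constant sign on \<open>[1, \<infinity>)\<close>, then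
  \<open>R k + \<phi> k\<close> is strictly monotone with limit \<open>0\<close> and hence has constant sign. The derivative
  condition is an inequality between rational functions, i.e. the sign of a polynomial.

  With \<open>\<phi> x = 1 / (12 x\<^sup>2 + 6/5)\<close> this gives the upper bound. With the sharper
  \<open>\<phi> x = 1 / (12 x\<^sup>2 + 6/5 - 1 / (2 x\<^sup>2))\<close> it gives a lower bound that implies the stated one
  for \<open>n \<ge> 2\<close>, because the constant \<open>a\<close> is at most \<open>6/5 - 1/8\<close>; at \<open>n = 1\<close> the stated bound is an
  equality, which also shows that \<open>a\<close> cannot be increased. Since \<open>6/5 - 1 / (2 n\<^sup>2) \<rightarrow> 6/5\<close>, the
  sharper lower bound shows that \<open>6/5\<close> cannot be decreased.
\<close>

lemma neg_if_deriv_pos_tendsto_zero: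
  fixes f f' :: "real \<Rightarrow> real"
  assumes deriv: "\<And>x. x \<ge> a \<Longrightarrow> (f has_real_derivative f' x) (at x)"
    and pos: "\<And>x. x \<ge> a \<Longrightarrow> f' x > 0"
    and lim: "(f \<longlongrightarrow> 0) at_top"
    and "x \<ge> a"
  shows "f x < 0"
proof -
  have mono: "f s < f t" if "a \<le> s" "s < t" for s t
  proof (rule DERIV_pos_imp_increasing[OF \<open>s < t\<close>])
    fix y assume "s \<le> y" "y \<le> t"
    with \<open>a \<le> s\<close> have "a \<le> y" by linarith
    with deriv pos show "\<exists>D. (f has_real_derivative D) (at y) \<and> D > 0" by blast
  qed
  have "f (x + 1) \<le> 0"
  proof (rule tendsto_lowerbound[OF lim])
    show "\<forall>\<^sub>F t in at_top. f (x + 1) \<le> f t"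
      using mono \<open>x \<ge> a\<close> by (intro eventually_at_top_linorderI[of "x + 2"]) (simp add: less_imp_le)
  qed simp
  with mono[of x "x + 1"] \<open>x \<ge> a\<close> show ?thesis by simp
qed

lemma pos_if_deriv_neg_tendsto_zero:
  fixes f f' :: "real \<Rightarrow> real"
  assumes "\<And>x. x \<ge> a \<Longrightarrow> (f has_real_derivative f' x) (at x)"
    and "\<And>x. x \<ge> a \<Longrightarrow> f' x < 0"
    and "(f \<longlongrightarrow> 0) at_top"
    and "x \<ge> a"
  shows "f x > 0"
  using neg_if_deriv_pos_tendsto_zero[of a "\<lambda>x. - f x" "\<lambda>x. - f' x" x] assms
    tendsto_minus[OF assms(3)]
  by (simp add: DERIV_minus)

lemma neg_if_strict_increasing_tendsto_zero:
  fixes S :: "nat \<Rightarrow> real"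
  assumes inc: "\<And>k. k \<ge> m \<Longrightarrow> S k < S (Suc k)" and lim: "S \<longlonglongrightarrow> 0" and "n \<ge> m"
  shows "S n < 0"
proof -
  have "S (Suc n) \<le> S k" if "Suc n \<le> k" for k
    using that
  proof (induction k rule: dec_induct)
    case (step k)
    with inc[of k] \<open>n \<ge> m\<close> show ?case by simp
  qed simp
  then have "S (Suc n) \<le> 0"
    by (intro LIMSEQ_le_const[OF lim]) blast
  with inc[OF \<open>n \<ge> m\<close>] show ?thesis by simp
qed

lemma pos_if_strict_decreasing_tendsto_zero:
  fixes S :: "nat \<Rightarrow> real"
  assumes "\<And>k. k \<ge> m \<Longrightarrow> S (Suc k) < S k" and "S \<longlonglongrightarrow> 0" and "n \<ge> m"
  shows "S n > 0"
  using neg_if_strict_increasing_tendsto_zero[of m "\<lambda>k. - S k" n] assms tendsto_minus[OF assms(2)]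
  by simp

definition R_step :: "real \<Rightarrow> real" where
  "R_step x = ln (x + 1) - ln x - 1 / (2 * x) - 1 / (2 * (x + 1))"

lemma H_Suc: "H (Suc k) = H k + 1 / (real k + 1)"
  by (simp add: H_def add.commute)

lemma R_diff_Suc: "R k - R (Suc k) = R_step (real k)"
proof -
  have suc: "real (Suc k) = real k + 1" by simp
  have "1 / (real k + 1) = 1 / (2 * (real k + 1)) + 1 / (2 * (real k + 1))"
    by (simp add: field_simps)
  then show ?thesis unfolding R_def R_step_def H_Suc suc by argo
qed

lemma R_tendsto_zero: "R \<longlonglongrightarrow> 0"
proof -
  have "(\<lambda>n. (harm n - ln (real n)) - 1 / (2 * real n) - euler_mascheroni) \<longlonglongrightarrow>
          euler_mascheroni - 0 - (euler_mascheroni :: real)"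
    by (intro tendsto_intros euler_mascheroni_LIMSEQ) real_asymp
  moreover have "R = (\<lambda>n. (harm n - ln (real n)) - 1 / (2 * real n) - euler_mascheroni)"
    by (simp add: fun_eq_iff R_def H_def harm_def inverse_eq_divide)
  ultimately show ?thesis by simp
qed

lemma R_step_deriv:
  assumes "x > 0"
  shows "(R_step has_real_derivative 1 / (2 * x^2 * (x + 1)^2)) (at x)"
proof -
  have "(R_step has_real_derivative 1 / (x + 1) - 1 / x + 1 / (2 * x^2) + 1 / (2 * (x + 1)^2)) (at x)"
    unfolding R_step_def using assms
    apply (intro derivative_eq_intros refl)
    apply simp_all
    apply (simp add: divide_simps)
    apply (simp add: algebra_simps power2_eq_square)
    done
  moreover have "1 / (x + 1) - 1 / x + 1 / (2 * x^2) + 1 / (2 * (x + 1)^2) = 1 / (2 * x^2 * (x + 1)^2)"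
    using assms by (simp add: divide_simps) (simp add: algebra_simps power2_eq_square)
  ultimately show ?thesis by simp
qed

definition R_step_plus :: "(real \<Rightarrow> real) \<Rightarrow> real \<Rightarrow> real" where
  "R_step_plus \<phi> x = R_step x + \<phi> x - \<phi> (x + 1)"

lemma R_plus_diff_Suc:
  "(R k + \<phi> (real k)) - (R (Suc k) + \<phi> (real (Suc k))) = R_step_plus \<phi> (real k)"
  using R_diff_Suc[of k] by (simp add: R_step_plus_def add.commute)

lemma R_step_plus_deriv:
  assumes deriv: "\<And>x. x \<ge> 1 \<Longrightarrow> (\<phi> has_real_derivative \<phi>' x) (at x)" and "x \<ge> 1"
  shows "(R_step_plus \<phi> has_real_derivative 1 / (2 * x^2 * (x + 1)^2) + \<phi>' x - \<phi>' (x + 1)) (at x)"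
proof -
  have "(\<phi> has_real_derivative \<phi>' (x + 1)) (at (x + 1))"
    using deriv \<open>x \<ge> 1\<close> by simp
  then have "((\<lambda>x. \<phi> (x + 1)) has_real_derivative \<phi>' (x + 1)) (at x)"
    by (simp only: DERIV_shift)
  then show ?thesis
    unfolding R_step_plus_def using \<open>x \<ge> 1\<close>
    by (intro DERIV_diff DERIV_add R_step_deriv deriv) auto
qed

lemma R_step_plus_tendsto_zero:
  assumes "(\<phi> \<longlongrightarrow> 0) at_top"
  shows "(R_step_plus \<phi> \<longlongrightarrow> 0) at_top"
proof -
  have "(R_step \<longlongrightarrow> 0) at_top"
    unfolding R_step_def by real_asymp
  moreover have "filterlim (\<lambda>x. x + 1) at_top (at_top :: real filter)"
    by real_asymp
  ultimately show ?thesis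
    unfolding R_step_plus_def using assms filterlim_compose[OF assms]
    by (intro tendsto_eq_intros) auto
qed

lemma R_plus_tendsto_zero:
  assumes "(\<phi> \<longlongrightarrow> 0) at_top"
  shows "(\<lambda>k. R k + \<phi> (real k)) \<longlonglongrightarrow> 0"
  using tendsto_add[OF R_tendsto_zero filterlim_compose[OF assms filterlim_real_sequentially]]
  by simp

lemma R_plus_neg_if_step_deriv_pos:
  fixes \<phi> \<phi>' :: "real \<Rightarrow> real"
  assumes deriv: "\<And>x. x \<ge> 1 \<Longrightarrow> (\<phi> has_real_derivative \<phi>' x) (at x)"
    and pos: "\<And>x. x \<ge> 1 \<Longrightarrow> 1 / (2 * x^2 * (x + 1)^2) + \<phi>' x - \<phi>' (x + 1) > 0"
    and lim: "(\<phi> \<longlongrightarrow> 0) at_top"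
    and "n \<ge> 1"
  shows "R n + \<phi> (real n) < 0"
proof (rule neg_if_strict_increasing_tendsto_zero[OF _ R_plus_tendsto_zero[OF lim] \<open>n \<ge> 1\<close>])
  fix k :: nat assume "k \<ge> 1"
  have "R_step_plus \<phi> (real k) < 0"
  proof (rule neg_if_deriv_pos_tendsto_zero[where f = "R_step_plus \<phi>"])
    show "(R_step_plus \<phi> has_real_derivative 1 / (2 * x^2 * (x + 1)^2) + \<phi>' x - \<phi>' (x + 1)) (at x)"
      if "x \<ge> 1" for x
      using deriv that by (rule R_step_plus_deriv)
    show "(R_step_plus \<phi> \<longlongrightarrow> 0) at_top"
      using lim by (rule R_step_plus_tendsto_zero)
  qed (use pos \<open>k \<ge> 1\<close> in auto)
  with R_plus_diff_Suc[of k \<phi>] show "R k + \<phi> (real k) < R (Suc k) + \<phi> (real (Suc k))"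
    by simp
qed

lemma R_plus_pos_if_step_deriv_neg:
  fixes \<phi> \<phi>' :: "real \<Rightarrow> real"
  assumes deriv: "\<And>x. x \<ge> 1 \<Longrightarrow> (\<phi> has_real_derivative \<phi>' x) (at x)"
    and neg: "\<And>x. x \<ge> 1 \<Longrightarrow> 1 / (2 * x^2 * (x + 1)^2) + \<phi>' x - \<phi>' (x + 1) < 0"
    and lim: "(\<phi> \<longlongrightarrow> 0) at_top"
    and "n \<ge> 1"
  shows "R n + \<phi> (real n) > 0"
proof (rule pos_if_strict_decreasing_tendsto_zero[OF _ R_plus_tendsto_zero[OF lim] \<open>n \<ge> 1\<close>])
  fix k :: nat assume "k \<ge> 1"
  have "R_step_plus \<phi> (real k) > 0"
  proof (rule pos_if_deriv_neg_tendsto_zero[where f = "R_step_plus \<phi>"])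
    show "(R_step_plus \<phi> has_real_derivative 1 / (2 * x^2 * (x + 1)^2) + \<phi>' x - \<phi>' (x + 1)) (at x)"
      if "x \<ge> 1" for x
      using deriv that by (rule R_step_plus_deriv)
    show "(R_step_plus \<phi> \<longlongrightarrow> 0) at_top"
      using lim by (rule R_step_plus_tendsto_zero)
  qed (use neg \<open>k \<ge> 1\<close> in auto)
  with R_plus_diff_Suc[of k \<phi>] show "R (Suc k) + \<phi> (real (Suc k)) < R k + \<phi> (real k)"
    by simp
qed

text \<open>
  The two comparison functions of the header, written as quotients of polynomials:
  \<open>5 / (60 x\<^sup>2 + 6) = 1 / (12 x\<^sup>2 + 6/5)\<close> and
  \<open>10 x\<^sup>2 / (120 x\<^sup>4 + 12 x\<^sup>2 - 5) = 1 / (12 x\<^sup>2 + 6/5 - 1 / (2 x\<^sup>2))\<close>.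
\<close>

lemma upper_comparison_deriv:
  "((\<lambda>x. 5 / (60 * x^2 + 6)) has_real_derivative - (600 * x / (60 * x^2 + 6)^2)) (at x)"
proof -
  have "0 \<le> x^2" by simp
  then have nz: "60 * x^2 + 6 \<noteq> 0" by linarith
  have "((\<lambda>x. 5 / (60 * x^2 + 6)) has_real_derivative
          (0 * (60 * x^2 + 6) - 120 * x * 5) / (60 * x^2 + 6)^2) (at x)"
    by (rule derivative_eq_intros refl | use nz in \<open>simp add: power2_eq_square\<close>)+
  then show ?thesis by simp
qed

lemma upper_comparison_step_deriv_pos:
  fixes x :: real
  assumes "x > 0"
  shows "1 / (2 * x^2 * (x + 1)^2) - 600 * x / (60 * x^2 + 6)^2
           + 600 * (x + 1) / (60 * (x + 1)^2 + 6)^2 > 0"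
proof -
  define w p q where "w = x^2 * (x + 1)^2"
    and "p = (60 * x^2 + 6)^2" and "q = (60 * (x + 1)^2 + 6)^2"
  have "0 \<le> x^2" "0 \<le> (x + 1)^2" by simp_all
  then have "60 * x^2 + 6 > 0" "60 * (x + 1)^2 + 6 > 0" by linarith+
  then have pos: "w > 0" "p > 0" "q > 0" using assms by (simp_all add: w_def p_def q_def)
  have "p * q - 1200 * w * (x * q - (x + 1) * p)
          = 156816 + 570240*x + 3983040*x^2 + 6825600*x^3 + 3412800*x^4"
    unfolding w_def p_def q_def
    by (simp add: algebra_simps power2_eq_square power3_eq_cube eval_nat_numeral)
  also have "\<dots> > 0" using assms by (simp add: add_pos_pos)
  finally have "(p * q - 1200 * w * (x * q - (x + 1) * p)) / (2 * w * p * q) > 0"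
    using pos by simp
  also have "(p * q - 1200 * w * (x * q - (x + 1) * p)) / (2 * w * p * q)
               = 1 / (2 * w) - 600 * x / p + 600 * (x + 1) / q"
    using pos by (simp add: field_simps)
  finally show ?thesis by (simp add: w_def p_def q_def mult.assoc)
qed

lemma R_upper_bound:
  assumes "n \<ge> 1"
  shows "R n < - 1 / (12 * real n ^ 2 + 6 / 5)"
proof -
  have "R n + 5 / (60 * real n ^ 2 + 6) < 0"
  proof (rule R_plus_neg_if_step_deriv_pos[OF upper_comparison_deriv _ _ assms])
    show "1 / (2 * x^2 * (x + 1)^2) + - (600 * x / (60 * x^2 + 6)^2)
            - - (600 * (x + 1) / (60 * (x + 1)^2 + 6)^2) > 0" if "x \<ge> 1" for x :: real
      unfolding add_uminus_conv_diff diff_minus_eq_add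
      using that by (intro upper_comparison_step_deriv_pos) simp
    show "((\<lambda>x::real. 5 / (60 * x^2 + 6)) \<longlongrightarrow> 0) at_top"
      by real_asymp
  qed
  moreover have "5 / (60 * real n ^ 2 + 6) = 1 / (12 * real n ^ 2 + 6 / 5)"
    by (simp add: field_simps)
  ultimately show ?thesis by simp
qed

lemma lower_comparison_deriv:
  fixes x :: real
  assumes "x \<ge> 1"
  shows "((\<lambda>x. 10 * x^2 / (120 * x^4 + 12 * x^2 - 5)) has_real_derivative
           - (100 * (24 * x^5 + x) / (120 * x^4 + 12 * x^2 - 5)^2)) (at x)"
proof -
  have "1 \<le> x^2" "1 \<le> x^4" using assms by (simp_all add: one_le_power)
  then have nz: "120 * x^4 + 12 * x^2 - 5 \<noteq> 0" by linarith
  have "((\<lambda>x. 10 * x^2 / (120 * x^4 + 12 * x^2 - 5)) has_real_derivative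
     (20 * x * (120 * x^4 + 12 * x^2 - 5) - (480 * x^3 + 24 * x) * (10 * x^2))
       / (120 * x^4 + 12 * x^2 - 5)^2) (at x)"
    by (rule derivative_eq_intros refl | use nz in \<open>simp add: power2_eq_square\<close>)+
  moreover have "20 * x * (120 * x^4 + 12 * x^2 - 5) - (480 * x^3 + 24 * x) * (10 * x^2)
                   = - (100 * (24 * x^5 + x))"
    by algebra
  ultimately show ?thesis by (simp only: minus_divide_left)
qed

lemma lower_comparison_step_deriv_neg:
  fixes x :: real
  assumes "x \<ge> 1"
  shows "1 / (2 * x^2 * (x + 1)^2) - 100 * (24 * x^5 + x) / (120 * x^4 + 12 * x^2 - 5)^2
           + 100 * (24 * (x + 1)^5 + (x + 1)) / (120 * (x + 1)^4 + 12 * (x + 1)^2 - 5)^2 < 0"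
proof -
  \<comment> \<open>In \<open>y = x - 1\<close> the numerator is minus a polynomial with positive coefficients.\<close>
  define y where "y = x - 1"
  have x: "x = y + 1" and "y \<ge> 0" using assms by (simp_all add: y_def)
  define w c d p q where "w = x^2 * (x + 1)^2"
    and "c = 24 * x^5 + x" and "d = 24 * (x + 1)^5 + (x + 1)"
    and "p = (120 * x^4 + 12 * x^2 - 5)^2" and "q = (120 * (x + 1)^4 + 12 * (x + 1)^2 - 5)^2"
  have "1 \<le> x^2" "1 \<le> x^4" "1 \<le> (x + 1)^2" "1 \<le> (x + 1)^4"
    using assms by (simp_all add: one_le_power)
  then have "120 * x^4 + 12 * x^2 - 5 > 0" "120 * (x + 1)^4 + 12 * (x + 1)^2 - 5 > 0"
    by linarith+
  then have pos: "w > 0" "p > 0" "q > 0" using assms by (simp_all add: w_def p_def q_def)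
  have "p * q - 200 * w * (c * q - d * p)
    = - (4980927399 + 36552136944 * y + 120162725512 * y^2 + 233992194000 * y^3
         + 300402249784 * y^4 + 267681162240 * y^5 + 169795529088 * y^6 + 77456233728 * y^7
         + 25420350144 * y^8 + 5959526400 * y^9 + 978946560 * y^10 + 105753600 * y^11
         + 5875200 * y^12)"
    unfolding w_def c_def d_def p_def q_def x by algebra
  also have "\<dots> < 0"
    unfolding neg_less_0_iff_less
    by (intro add_pos_nonneg mult_nonneg_nonneg zero_le_power) (simp_all add: \<open>y \<ge> 0\<close>)
  finally have "(p * q - 200 * w * (c * q - d * p)) / (2 * w * p * q) < 0"
    using pos by (simp add: divide_neg_pos)
  also have "(p * q - 200 * w * (c * q - d * p)) / (2 * w * p * q)
               = 1 / (2 * w) - 100 * c / p + 100 * d / q"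
    using pos by (simp add: field_simps)
  finally show ?thesis by (simp add: w_def c_def d_def p_def q_def mult.assoc)
qed

lemma R_lower_bound:
  assumes "n \<ge> 1"
  shows "- 1 / (12 * real n ^ 2 + 6 / 5 - 1 / (2 * real n ^ 2)) < R n"
proof -
  have "R n + 10 * real n ^ 2 / (120 * real n ^ 4 + 12 * real n ^ 2 - 5) > 0"
  proof (rule R_plus_pos_if_step_deriv_neg[OF lower_comparison_deriv _ _ assms])
    show "1 / (2 * x^2 * (x + 1)^2) + - (100 * (24 * x^5 + x) / (120 * x^4 + 12 * x^2 - 5)^2)
            - - (100 * (24 * (x + 1)^5 + (x + 1)) / (120 * (x + 1)^4 + 12 * (x + 1)^2 - 5)^2) < 0"
      if "x \<ge> 1" for x :: real
      unfolding add_uminus_conv_diff diff_minus_eq_add by (rule lower_comparison_step_deriv_neg[OF that])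
    show "((\<lambda>x::real. 10 * x^2 / (120 * x^4 + 12 * x^2 - 5)) \<longlongrightarrow> 0) at_top"
      by real_asymp
  qed
  moreover have "10 * real n ^ 2 / (120 * real n ^ 4 + 12 * real n ^ 2 - 5)
                   = 1 / (12 * real n ^ 2 + 6 / 5 - 1 / (2 * real n ^ 2))"
    using assms by (simp add: field_simps eval_nat_numeral)
  ultimately show ?thesis by simp
qed

lemma R_1: "R 1 = 1 / 2 - euler_mascheroni"
  by (simp add: R_def H_def)

lemma ln_2_le: "ln (2 :: real) \<le> 6932 / 10000"
  using ln_approx_bounds[of 2 3] by (simp add: eval_nat_numeral)

text \<open>The library bound \<open>\<gamma> > 19/33\<close> does not give \<open>a \<le> 43/40\<close>; the upper bound at \<open>n = 2\<close> does.\<close>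

lemma euler_mascheroni_gt_5771: "(euler_mascheroni :: real) > 5771 / 10000"
proof -
  have "H 2 = 3 / 2" by (simp add: H_def eval_nat_numeral)
  then have "R 2 = 5 / 4 - ln 2 - euler_mascheroni" by (simp add: R_def)
  with R_upper_bound[of 2] ln_2_le show ?thesis by simp
qed

definition lower_bound_constant :: real where
  "lower_bound_constant = 2 * (7 - 12 * euler_mascheroni) / (2 * euler_mascheroni - 1)"

lemma lower_bound_constant_eq: "12 + lower_bound_constant = 2 / (2 * euler_mascheroni - 1)"
proof -
  have "2 * euler_mascheroni - 1 \<noteq> (0 :: real)"
    using euler_mascheroni_gt_5771 by simp
  then show ?thesis by (simp add: lower_bound_constant_def field_simps)
qed

lemma R_1_eq_lower_bound: "R 1 = - 1 / (12 + lower_bound_constant)"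
  unfolding R_1 lower_bound_constant_eq by (simp add: field_simps)

lemma lower_bound_constant_gt: "12 + lower_bound_constant > 0"
  unfolding lower_bound_constant_eq using euler_mascheroni_gt_5771 by simp

lemma lower_bound_constant_le: "lower_bound_constant \<le> 43 / 40"
  using euler_mascheroni_gt_5771 by (simp add: lower_bound_constant_def divide_simps)

lemma R_gt_lower_bound:
  assumes "n \<ge> 2"
  shows "- 1 / (12 * real n ^ 2 + lower_bound_constant) < R n"
proof -
  have "4 \<le> real n ^ 2" using assms power_mono[of 2 "real n" 2] by simp
  then have "1 / (2 * real n ^ 2) \<le> 1 / 8" by (simp add: divide_simps)
  then have "0 < 12 * real n ^ 2 + lower_bound_constant"
    and "12 * real n ^ 2 + lower_bound_constant \<le> 12 * real n ^ 2 + 6 / 5 - 1 / (2 * real n ^ 2)"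
    using lower_bound_constant_gt lower_bound_constant_le \<open>4 \<le> real n ^ 2\<close> by linarith+
  then have "- 1 / (12 * real n ^ 2 + lower_bound_constant)
               \<le> - 1 / (12 * real n ^ 2 + 6 / 5 - 1 / (2 * real n ^ 2))"
    by (intro divide_left_mono_neg mult_pos_pos) auto
  with R_lower_bound[of n] assms show ?thesis by simp
qed

lemma lower_bound_constant_optimal:
  assumes "c > lower_bound_constant"
  shows "\<not> (\<forall>n::nat. n \<ge> 1 \<longrightarrow> - 1 / (12 * real n ^ 2 + c) \<le> R n)"
proof
  assume "\<forall>n::nat. n \<ge> 1 \<longrightarrow> - 1 / (12 * real n ^ 2 + c) \<le> R n"
  then have "- 1 / (12 * real 1 ^ 2 + c) \<le> R 1" by blast
  then have "- 1 / (12 + c) \<le> - 1 / (12 + lower_bound_constant)"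
    unfolding R_1_eq_lower_bound by simp
  moreover have "- 1 / (12 + lower_bound_constant) < - 1 / (12 + c)"
    using lower_bound_constant_gt assms by (intro divide_strict_left_mono_neg mult_pos_pos) auto
  ultimately show False by simp
qed

lemma R_eventually_gt:
  assumes "b < 6 / 5"
  shows "eventually (\<lambda>n. - 1 / (12 * real n ^ 2 + b) < R n) sequentially"
proof -
  have "eventually (\<lambda>n. 1 / (2 * real n ^ 2) < 6 / 5 - b) sequentially"
    using assms by real_asymp
  moreover have "eventually (\<lambda>n. 12 * real n ^ 2 + b > 0) sequentially"
    by real_asymp
  ultimately show ?thesis using eventually_ge_at_top[of 1]
  proof eventually_elim
    case (elim n)
    then have "- 1 / (12 * real n ^ 2 + b) < - 1 / (12 * real n ^ 2 + 6 / 5 - 1 / (2 * real n ^ 2))"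
      by (intro divide_strict_left_mono_neg mult_pos_pos) auto
    with R_lower_bound[OF \<open>n \<ge> 1\<close>] show ?case by simp
  qed
qed

lemma upper_bound_constant_optimal:
  assumes "b < 6 / 5"
  shows "\<not> (\<forall>n::nat. n \<ge> 1 \<longrightarrow> R n < - 1 / (12 * real n ^ 2 + b))"
proof
  assume upper: "\<forall>n::nat. n \<ge> 1 \<longrightarrow> R n < - 1 / (12 * real n ^ 2 + b)"
  obtain N where N: "\<forall>n \<ge> N. - 1 / (12 * real n ^ 2 + b) < R n"
    using R_eventually_gt[OF assms] by (auto simp: eventually_sequentially)
  have "- 1 / (12 * real (Suc N) ^ 2 + b) < R (Suc N)"
    using N[rule_format, of "Suc N"] by simp
  moreover have "R (Suc N) < - 1 / (12 * real (Suc N) ^ 2 + b)"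
    using upper[rule_format, of "Suc N"] by simp
  ultimately show False by linarith
qed

theorem theorem1:
  defines "a \<equiv> 2 * (7 - 12 * (euler_mascheroni::real)) / (2 * euler_mascheroni - 1)"
  shows "(\<forall>n::nat. n \<ge> 1 \<longrightarrow>
            - 1 / (12 * real n ^ 2 + a) \<le> R n \<and> R n < - 1 / (12 * real n ^ 2 + 6 / 5))
       \<and> (\<forall>n::nat. n \<ge> 1 \<longrightarrow> (R n = - 1 / (12 * real n ^ 2 + a) \<longleftrightarrow> n = 1))
       \<and> (\<forall>a'::real. a' > a \<longrightarrow>
            \<not> (\<forall>n::nat. n \<ge> 1 \<longrightarrow> - 1 / (12 * real n ^ 2 + a') \<le> R n))
       \<and> (\<forall>b'::real. b' < 6 / 5 \<longrightarrow>
            \<not> (\<forall>n::nat. n \<ge> 1 \<longrightarrow> R n < - 1 / (12 * real n ^ 2 + b')))"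
proof -
  have a: "a = lower_bound_constant"
    unfolding a_def lower_bound_constant_def ..
  have equality: "R n = - 1 / (12 * real n ^ 2 + a) \<longleftrightarrow> n = 1" if "n \<ge> 1" for n
    using R_1_eq_lower_bound R_gt_lower_bound[of n] that unfolding a by (cases "n = 1") auto
  have "- 1 / (12 * real n ^ 2 + a) \<le> R n" if "n \<ge> 1" for n
    using equality[OF that] R_gt_lower_bound[of n] that unfolding a by (cases "n = 1") auto
  with R_upper_bound equality show ?thesis
    unfolding a using lower_bound_constant_optimal upper_bound_constant_optimal by blast
qed

end
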